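(* Let $S$ be a finite abelian semigroup with a zero element, its nonzero elements labelled $\lambda_i$, $i=0,\dots,N$, and $\lambda_{N+1}=0_S$; let $K_{i_1\cdots i_n}{}^{j}$ denote its $n$-selector restricted to indices $i_k,j\in\{0,\dots,N\}$. Let $\mathfrak g$ be a Lie superalgebra with basis $\{T_A\}$ and let $|T_{A_1}\cdots T_{A_n}|$ be an invariant tensor for $\mathfrak g$. Then for arbitrary constants $\alpha_j$, $$|T_{(A_1,i_1)}\cdots T_{(A_n,i_n)}|:=\sum_{j=0}^{N}\alpha_j K_{i_1\cdots i_n}{}^{j}\,|T_{A_1}\cdots T_{A_n}|$$ is an invariant tensor for the $0_S$-forced algebra obtained from $\mathfrak G=S\otimes\mathfrak g$.
   Context: A semigroup is a set with a closed associative multiplication; a zero element $0_S$ satisfies $0_S\lambda=\lambda0_S=0_S$ for all $\lambda\in S$. The $n$-selector $K_{\alpha_1\cdots\alpha_n}{}^{\gamma}$ equals $1$ if $\lambda_{\alpha_1}\cdots\lambda_{\alpha_n}=\lambda_\gamma$ and $0$ otherwise. If $\mathfrak g$ has basis $\{T_A\}$ with grading $\mathfrak q(A)$ and structure constants $C_{AB}{}^C$, the $0_S$-forced algebra of $S\otimes\mathfrak g$ is the vector space with basis $T_{(A,i)}$, $i=0,\dots,N$ (i.e. $\lambda_iT_A$ with the generators $0_ST_A$ set to zero), grading $\mathfrak q(A,i)=\mathfrak q(A)$ and bracket $[T_{(A,i)},T_{(B,j)}]=\sum_{k=0}^N K_{ij}{}^{k}C_{AB}{}^{C}T_{(C,k)}$.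 A rank-$n$ tensor $|T_{A_1}\cdots T_{A_n}|$ on a Lie superalgebra with structure constants $C_{AB}{}^C$ is invariant if for all $A_0,\dots,A_n$: $\sum_{p=1}^{n}(-1)^{\mathfrak q(A_0)(\mathfrak q(A_1)+\cdots+\mathfrak q(A_{p-1}))}C_{A_0A_p}{}^{B}|T_{A_1}\cdots T_{A_{p-1}}T_BT_{A_{p+1}}\cdots T_{A_n}|=0$. *)

theory Defs
  imports Main
begin

definition abelian_semigroup_with_zero :: "('s \<Rightarrow> 's \<Rightarrow> 's) \<Rightarrow> 's \<Rightarrow> bool" where
  "abelian_semigroup_with_zero mul z \<longleftrightarrow>
     (\<forall>x y w. mul (mul x y) w = mul x (mul y w)) \<and>
     (\<forall>x y. mul x y = mul y x) \<and>
     (\<forall>x. mul z x = z \<and> mul x z = z)"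

definition sg_prod :: "('s \<Rightarrow> 's \<Rightarrow> 's) \<Rightarrow> 's list \<Rightarrow> 's" where
  "sg_prod mul xs = foldl mul (hd xs) (tl xs)"

definition selector :: "('s \<Rightarrow> 's \<Rightarrow> 's) \<Rightarrow> 's list \<Rightarrow> 's \<Rightarrow> 'k::zero_neq_one" where
  "selector mul xs g = (if sg_prod mul xs = g then 1 else 0)"

text \<open>Lie superalgebra given by structure constants C A B E (i.e. [T_A,T_B] = sum_E C A B E T_E)
  on a finite basis with Z_2-grading q (values 0 or 1).\<close>
definition lie_superalgebra :: "('a::finite \<Rightarrow> nat) \<Rightarrow> ('a \<Rightarrow> 'a \<Rightarrow> 'a \<Rightarrow> 'k::field) \<Rightarrow> bool" where
  "lie_superalgebra q C \<longleftrightarrow>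
     (\<forall>A. q A \<in> {0, 1}) \<and>
     (\<forall>A B E. C A B E \<noteq> 0 \<longrightarrow> q E = (q A + q B) mod 2) \<and>
     (\<forall>A B E. C A B E = - ((-1) ^ (q A * q B)) * C B A E) \<and>
     (\<forall>A B D F.
        (-1) ^ (q A * q D) * (\<Sum>E\<in>UNIV. C B D E * C A E F)
      + (-1) ^ (q B * q A) * (\<Sum>E\<in>UNIV. C D A E * C B E F)
      + (-1) ^ (q D * q B) * (\<Sum>E\<in>UNIV. C A B E * C D E F) = 0)"

text \<open>Invariance of a rank-n tensor t (a function on length-n lists of basis indices from
  the basis set Bs) for the algebra with grading q and structure constants C.\<close>
definition invariant_tensor ::
  "'b set \<Rightarrow> ('b \<Rightarrow> nat) \<Rightarrow> ('b \<Rightarrow> 'b \<Rightarrow> 'b \<Rightarrow> 'k::comm_ring_1) \<Rightarrow> nat \<Rightarrow> ('b list \<Rightarrow> 'k) \<Rightarrow> bool" where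
  "invariant_tensor Bs q C n t \<longleftrightarrow>
     (\<forall>A0\<in>Bs. \<forall>As. length As = n \<longrightarrow> set As \<subseteq> Bs \<longrightarrow>
        (\<Sum>p<n. (-1) ^ (q A0 * (\<Sum>k<p. q (As ! k))) *
                 (\<Sum>B\<in>Bs. C A0 (As ! p) B * t (As[p := B]))) = 0)"

text \<open>0_S-forced algebra of S \<otimes> g: basis (A,i) with i a nonzero element of S.\<close>
definition forced_basis :: "'s \<Rightarrow> ('a \<times> 's) set" where
  "forced_basis z = UNIV \<times> {i. i \<noteq> z}"

definition forced_grading :: "('a \<Rightarrow> nat) \<Rightarrow> ('a \<times> 's) \<Rightarrow> nat" where
  "forced_grading q Ai = q (fst Ai)"

definition forced_constants ::
  "('s \<Rightarrow> 's \<Rightarrow> 's) \<Rightarrow> ('a \<Rightarrow> 'a \<Rightarrow> 'a \<Rightarrow> 'k::field) \<Rightarrow> ('a \<times> 's) \<Rightarrow> ('a \<times> 's) \<Rightarrow> ('a \<times> 's) \<Rightarrow> 'k" where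
  "forced_constants mul C Ai Bj Ck = selector mul [snd Ai, snd Bj] (snd Ck) * C (fst Ai) (fst Bj) (fst Ck)"

definition induced_tensor ::
  "('s \<Rightarrow> 's \<Rightarrow> 's) \<Rightarrow> 's \<Rightarrow> ('s \<Rightarrow> 'k::field) \<Rightarrow> ('a list \<Rightarrow> 'k) \<Rightarrow> ('a \<times> 's) list \<Rightarrow> 'k" where
  "induced_tensor mul z \<alpha> t Ais =
     (\<Sum>j\<in>{j. j \<noteq> z}. \<alpha> j * selector mul (map snd Ais) j * t (map fst Ais))"

end

theory Submission
  imports Defs
begin

text \<open>For nonzero j the selectors satisfy
  sum_{k nonzero} K_{a i_p}^k K_{i_1 .. k .. i_n}^j = K_{a i_1 .. i_n}^j:
  the terms with k = 0_S discarded by the 0_S-forced algebra would contribute nothing anyway,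
  because a product containing 0_S is never a nonzero j. Hence the bracket with T_(A_0, i_0),
  acting on the p-th slot of the induced tensor, multiplies the p-th term of the invariance sum
  of t by sum_j \<alpha>_j K_{i_0 i_1 .. i_n}^j. This factor does not depend on p, so the invariance
  of t carries over.\<close>

lemma abelian_semigroup_with_zeroD:
  assumes "abelian_semigroup_with_zero mul z"
  shows "mul (mul x y) w = mul x (mul y w)" and "mul x y = mul y x" and "mul z x = z"
  using assms unfolding abelian_semigroup_with_zero_def by auto

lemma foldl_mul_left:
  assumes assoc: "\<And>x y w. mul (mul x y) w = mul x (mul y w)"
  shows "foldl mul (mul a x) xs = mul a (foldl mul x xs)"
  by (induction xs arbitrary: x) (simp_all add: assoc)

lemma foldl_update_mul_left:
  assumes assoc: "\<And>x y w. mul (mul x y) w = mul x (mul y w)"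
    and comm: "\<And>x y. mul x y = mul y x"
    and "p < length xs"
  shows "foldl mul x (xs[p := mul a (xs ! p)]) = mul a (foldl mul x xs)"
  using \<open>p < length xs\<close>
proof (induction xs arbitrary: x p)
  case Nil
  then show ?case by simp
next
  case (Cons y ys)
  show ?case
  proof (cases p)
    case 0
    have "mul x (mul a y) = mul a (mul x y)"
      by (metis assoc comm)
    then show ?thesis
      using 0 foldl_mul_left[OF assoc] by simp
  next
    case (Suc p')
    then show ?thesis
      using Cons by simp
  qed
qed

lemma sg_prod_Cons:
  assumes assoc: "\<And>x y w. mul (mul x y) w = mul x (mul y w)"
    and "xs \<noteq> []"
  shows "sg_prod mul (a # xs) = mul a (sg_prod mul xs)"
  using \<open>xs \<noteq> []\<close> foldl_mul_left[OF assoc]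
  by (cases xs) (simp_all add: sg_prod_def)

lemma sg_prod_update_mul_left:
  assumes assoc: "\<And>x y w. mul (mul x y) w = mul x (mul y w)"
    and comm: "\<And>x y. mul x y = mul y x"
    and "p < length xs"
  shows "sg_prod mul (xs[p := mul a (xs ! p)]) = mul a (sg_prod mul xs)"
proof (cases xs)
  case Nil
  then show ?thesis
    using \<open>p < length xs\<close> by simp
next
  case (Cons y ys)
  then show ?thesis
    using \<open>p < length xs\<close> foldl_mul_left[OF assoc] foldl_update_mul_left[OF assoc comm]
    by (cases p) (simp_all add: sg_prod_def)
qed

lemma sum_selector_update:
  fixes mul :: "'s::finite \<Rightarrow> 's \<Rightarrow> 's"
  assumes asg: "abelian_semigroup_with_zero mul z" and "j \<noteq> z" and p: "p < length xs"
  shows "(\<Sum>k\<in>{k. k \<noteq> z}. selector mul [a, xs ! p] k * selector mul (xs[p := k]) j :: 'k::semiring_1)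
      = selector mul (a # xs) j"
proof -
  note assoc = abelian_semigroup_with_zeroD(1)[OF asg]
  note comm = abelian_semigroup_with_zeroD(2)[OF asg]
  have prod_eq: "sg_prod mul (a # xs) = sg_prod mul (xs[p := mul a (xs ! p)])"
  proof -
    have "xs \<noteq> []"
      using p by auto
    then show ?thesis
      using p by (simp add: sg_prod_Cons[OF assoc] sg_prod_update_mul_left[OF assoc comm])
  qed
  have "(\<Sum>k\<in>{k. k \<noteq> z}. selector mul [a, xs ! p] k * selector mul (xs[p := k]) j :: 'k)
      = (\<Sum>k\<in>{k. k \<noteq> z}. if mul a (xs ! p) = k then selector mul (xs[p := k]) j else 0)"
    by (rule sum.cong) (simp_all add: selector_def sg_prod_def)
  also have "\<dots> = selector mul (xs[p := mul a (xs ! p)]) j"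
  proof (cases "mul a (xs ! p) = z")
    case True
    note zero = abelian_semigroup_with_zeroD(3)[OF asg]
    have "sg_prod mul (xs[p := mul a (xs ! p)]) = sg_prod mul (xs[p := mul z (xs ! p)])"
      using True zero by simp
    also have "\<dots> = z"
      using sg_prod_update_mul_left[OF assoc comm p, of z] zero by simp
    finally have "sg_prod mul (xs[p := mul a (xs ! p)]) = z" .
    then show ?thesis
      using True \<open>j \<noteq> z\<close> by (simp add: selector_def)
  next
    case False
    then show ?thesis
      by (simp add: sum.delta)
  qed
  finally show ?thesis
    by (simp add: selector_def prod_eq)
qed

lemma forced_bracket_induced_tensor:
  fixes mul :: "'s::finite \<Rightarrow> 's \<Rightarrow> 's" and C :: "'a::finite \<Rightarrow> 'a \<Rightarrow> 'a \<Rightarrow> 'k::field"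
  assumes asg: "abelian_semigroup_with_zero mul z" and p: "p < length As"
  shows "(\<Sum>B\<in>forced_basis z. forced_constants mul C (a0, i0) (As ! p) B
            * induced_tensor mul z \<alpha> t (As[p := B]))
       = (\<Sum>j\<in>{j. j \<noteq> z}. \<alpha> j * selector mul (i0 # map snd As) j)
            * (\<Sum>b\<in>UNIV. C a0 (map fst As ! p) b * t ((map fst As)[p := b]))"
proof -
  define K where "K = {k::'s. k \<noteq> z}"
  define as where "as = map fst As"
  define iss where "iss = map snd As"
  define c where "c = (\<Sum>j\<in>K. \<alpha> j * selector mul (i0 # iss) j)"
  define s where "s k j = (selector mul [i0, iss ! p] k * selector mul (iss[p := k]) j :: 'k)" for k j
  have p': "p < length iss"
    using p by (simp add: iss_def)
  have summand: "forced_constants mul C (a0, i0) (As ! p) (b, k) * induced_tensor mul z \<alpha> t (As[p := (b, k)])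
      = C a0 (as ! p) b * t (as[p := b]) * (\<Sum>j\<in>K. \<alpha> j * s k j)" for b k
    using p
    by (simp add: forced_constants_def induced_tensor_def map_update sum_distrib_left s_def
        as_def iss_def K_def mult_ac)
  have "(\<Sum>B\<in>forced_basis z. forced_constants mul C (a0, i0) (As ! p) B
            * induced_tensor mul z \<alpha> t (As[p := B]))
      = (\<Sum>b\<in>UNIV. C a0 (as ! p) b * t (as[p := b]) * (\<Sum>k\<in>K. \<Sum>j\<in>K. \<alpha> j * s k j))"
    unfolding forced_basis_def K_def[symmetric] sum.cartesian_product' summand
    by (simp add: sum_distrib_left)
  also have "(\<Sum>k\<in>K. \<Sum>j\<in>K. \<alpha> j * s k j) = (\<Sum>j\<in>K. \<alpha> j * (\<Sum>k\<in>K. s k j))"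
    by (subst sum.swap) (simp add: sum_distrib_left)
  also have "\<dots> = c"
    unfolding c_def s_def K_def using asg p'
    by (intro sum.cong refl arg_cong2[where f = "(*)"] sum_selector_update) simp_all
  finally show ?thesis
    by (simp add: sum_distrib_right mult_ac c_def as_def iss_def K_def)
qed

lemma invariant_tensor_induced_tensor:
  fixes mul :: "'s::finite \<Rightarrow> 's \<Rightarrow> 's" and C :: "'a::finite \<Rightarrow> 'a \<Rightarrow> 'a \<Rightarrow> 'k::field"
  assumes asg: "abelian_semigroup_with_zero mul z"
    and inv: "invariant_tensor UNIV q C n t"
  shows "invariant_tensor (forced_basis z) (forced_grading q) (forced_constants mul C) n
           (induced_tensor mul z \<alpha> t)"
  unfolding invariant_tensor_def
proof (intro ballI allI impI)
  fix A0 :: "'a \<times> 's" and As :: "('a \<times> 's) list"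
  assume len: "length As = n"
  obtain a0 i0 where A0: "A0 = (a0, i0)"
    by fastforce
  define as where "as = map fst As"
  have len_as: "length as = n"
    using len by (simp add: as_def)
  define c where "c = (\<Sum>j\<in>{j. j \<noteq> z}. \<alpha> j * selector mul (i0 # map snd As) j)"
  define sign where "sign p = ((-1) ^ (q a0 * (\<Sum>k<p. q (as ! k))) :: 'k)" for p
  have inv_as: "(\<Sum>p<n. sign p * (\<Sum>b\<in>UNIV. C a0 (as ! p) b * t (as[p := b]))) = 0"
    using inv len_as unfolding invariant_tensor_def sign_def by blast
  have forced_sign: "(-1) ^ (forced_grading q (a0, i0) * (\<Sum>k<p. forced_grading q (As ! k))) = sign p"
    if "p < n" for p
    using that len by (simp add: sign_def forced_grading_def as_def)
  have "(\<Sum>p<n. (-1) ^ (forced_grading q A0 * (\<Sum>k<p. forced_grading q (As ! k)))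
          * (\<Sum>B\<in>forced_basis z. forced_constants mul C A0 (As ! p) B
               * induced_tensor mul z \<alpha> t (As[p := B])))
      = (\<Sum>p<n. c * (sign p * (\<Sum>b\<in>UNIV. C a0 (as ! p) b * t (as[p := b]))))"
    (is "(\<Sum>p<n. ?term p) = _")
  proof (intro sum.cong refl)
    fix p
    assume "p \<in> {..<n}"
    then have "p < n" and "p < length As"
      using len by simp_all
    then show "?term p = c * (sign p * (\<Sum>b\<in>UNIV. C a0 (as ! p) b * t (as[p := b])))"
      unfolding A0 forced_sign[OF \<open>p < n\<close>] forced_bracket_induced_tensor[OF asg \<open>p < length As\<close>]
      by (simp add: c_def as_def)
  qed
  also have "\<dots> = 0"
    using inv_as by (simp add: sum_distrib_left[symmetric])
  finally show "(\<Sum>p<n. ?term p) = 0" .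
qed

theorem theorem4:
  fixes mul :: "'s::finite \<Rightarrow> 's \<Rightarrow> 's" and z :: 's
    and q :: "'a::finite \<Rightarrow> nat" and C :: "'a \<Rightarrow> 'a \<Rightarrow> 'a \<Rightarrow> 'k::field"
    and n :: nat and t :: "'a list \<Rightarrow> 'k" and \<alpha> :: "'s \<Rightarrow> 'k"
  assumes "abelian_semigroup_with_zero mul z"
    and "\<exists>x. x \<noteq> z"
    and "lie_superalgebra q C"
    and "n \<ge> 1"
    and "invariant_tensor UNIV q C n t"
  shows "invariant_tensor (forced_basis z) (forced_grading q) (forced_constants mul C) n
           (induced_tensor mul z \<alpha> t)"
  using assms(1,5) by (rule invariant_tensor_induced_tensor)

end
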